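(* In a generalised differential Seely category, for every morphism $(f,u):(X,A)\to(Y,B)$ of $LS(\mathscr C)$, $\mathrm D_2(⦃(f,u)⦄)=\pi_1^*(\mathrm{id}_X,u);⦃(f,u)⦄^*i^{Y,\mathcal U(B)}_2$, where $\pi_1:X\times\mathcal U(A)\to X$ and $(\mathrm{id}_X,u):(X,A)\to(X,B)$ is regarded as a morphism of the fibre over $X$.
   Context: Composition is diagrammatic; monoidal categories are strict. Setting: an LNL adjunction $\mathcal F\dashv\mathcal U$, $\mathcal F:\mathscr C\to\mathcal L$, between cartesian $(\mathscr C,\times,I)$ and symmetric monoidal $(\mathcal L,\otimes,1)$; $\mathcal U$ lax monoidal via $n_{A,B}:\mathcal U(A)\times\mathcal U(B)\to\mathcal U(A\otimes B)$; $\mathcal F$ strong monoidal via isomorphisms $m_{X,Y}$, $m_1$; unit $\eta$; $\mathbf c_X:=\mathcal F(\Delta_X);m_{X,X}^{-1}$, $\mathbf w_X:=\mathcal F(t_X);m_1^{-1}$. $LS(\mathscr C)$: objects $(X,A)$; morphisms $(f,u):(X,A)\to(Y,B)$ with $f:X\to Y$, $u:\mathcal F(X)\otimes A\to B$; composition $(f,u);(g,v)=(f;g,(\mathbf c_X\otimes\mathrm{id}_A);(\mathcal F(f)\otimes u);v)$; identity $(\mathrm{id}_X,\mathbf w_X\otimes\mathrm{id}_A)$; $\mathbf{ls}(f,u)=f$; fibre over $X$ = morphisms $(\mathrm{id}_X,u)$; reindexing along $h:X'\to X$: $h^*(X,B)=(X',B)$, $h^*(\mathrm{id}_X,v)=(\mathrm{id}_{X'},(\mathcal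 F(h)\otimes\mathrm{id}_B);v)$. With biproducts $\oplus$ in $\mathcal L$: fibrewise injections $\iota^X_i=(\mathrm{id}_X,\mathbf w_X\otimes\iota_i)$; products in $LS(\mathscr C)$: $(X\times Y,A\oplus B)$ with projections $(\pi_i,\mathbf w_{X\times Y}\otimes\pi_i)$. GDSC: $\mathcal L$ additive (CMon-enriched, $\otimes$ bilinear) with finite products, and a functor $\mathcal T:\mathscr C\to LS(\mathscr C)$ with: (t.1) $\mathbf{ls}\circ\mathcal T=\mathrm{id}$, so $\mathcal T(X)=(X,\lambda(X))$, and $\varphi_{X,Y}:=\langle\mathcal T(\pi_1),\mathcal T(\pi_2)\rangle:\mathcal T(X\times Y)\to(X\times Y,\lambda(X)\oplus\lambda(Y))$ is an isomorphism; (t.2) $\mathcal T(\mathcal U(A))=(\mathcal U(A),A)$; (t.3) with $i^{X,Y}_2:=\iota^{X\times Y}_2;\varphi^{-1}_{X,Y}:(X\times Y,\lambda(Y))\to\mathcal T(X\times Y)$, comprehension $⦃(f,u)⦄:=\langle\pi_1;f,(\eta_X\times\mathrm{id}_{\mathcal U(A)});n_{\mathcal F(X),A};\mathcal U(u)\rangle:X\times\mathcal U(A)\to Y\times\mathcal U(B)$, weakening $W(f,u):=(⦃(f,u)⦄,(\mathcal F(\pi_1)\otimes\mathrm{id}_A);u):(X\times\mathcal U(A),A)\to(Y\times\mathcal U(B),B)$: $W(f,u);i^{Y,\mathcal U(B)}_2=i^{X,\mathcal U(A)}_2;\mathcal T(⦃(f,u)⦄)$. Differential: for $g:X\to Y$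 with $\mathcal T(g)=(g,v)$, $\mathrm D(g):=(\mathrm{id}_X,v):(X,\lambda(X))\to(X,\lambda(Y))$. Partial differential: for $g:X\times Y\to Z$, $\mathrm D_2(g):=i^{X,Y}_2;\mathrm D(g):(X\times Y,\lambda(Y))\to(X\times Y,\lambda(Z))$. *)

theory Defs
  imports Main
begin

section \<open>Categories (objects = a whole type; composition diagrammatic)\<close>

record ('o,'m) cat =
  hom :: "'o \<Rightarrow> 'o \<Rightarrow> 'm set"
  cmp :: "'m \<Rightarrow> 'm \<Rightarrow> 'm"   (* cmp f g = f;g  (first f, then g) *)
  idt :: "'o \<Rightarrow> 'm"

definition is_cat :: "('o,'m,'x) cat_scheme \<Rightarrow> bool" where
  "is_cat K \<longleftrightarrow>
    (\<forall>X. idt K X \<in> hom K X X) \<and>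
    (\<forall>X Y Z f g. f \<in> hom K X Y \<longrightarrow> g \<in> hom K Y Z \<longrightarrow> cmp K f g \<in> hom K X Z) \<and>
    (\<forall>X Y f. f \<in> hom K X Y \<longrightarrow> cmp K (idt K X) f = f \<and> cmp K f (idt K Y) = f) \<and>
    (\<forall>W X Y Z f g h. f \<in> hom K W X \<longrightarrow> g \<in> hom K X Y \<longrightarrow> h \<in> hom K Y Z \<longrightarrow>
        cmp K (cmp K f g) h = cmp K f (cmp K g h))"

definition is_functor :: "('o,'m,'x) cat_scheme \<Rightarrow> ('p,'n,'y) cat_scheme \<Rightarrow>
    ('o \<Rightarrow> 'p) \<Rightarrow> ('m \<Rightarrow> 'n) \<Rightarrow> bool" where
  "is_functor K K' Fo Fm \<longleftrightarrow>
    (\<forall>X Y f. f \<in> hom K X Y \<longrightarrow> Fm f \<in> hom K' (Fo X) (Fo Y)) \<and>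
    (\<forall>X. Fm (idt K X) = idt K' (Fo X)) \<and>
    (\<forall>X Y Z f g. f \<in> hom K X Y \<longrightarrow> g \<in> hom K Y Z \<longrightarrow> Fm (cmp K f g) = cmp K' (Fm f) (Fm g))"

definition is_iso_pair :: "('o,'m,'x) cat_scheme \<Rightarrow> 'o \<Rightarrow> 'o \<Rightarrow> 'm \<Rightarrow> 'm \<Rightarrow> bool" where
  "is_iso_pair K X Y f g \<longleftrightarrow> f \<in> hom K X Y \<and> g \<in> hom K Y X \<and>
     cmp K f g = idt K X \<and> cmp K g f = idt K Y"

section \<open>Strict cartesian category\<close>

record ('o,'m) cart = "('o,'m) cat" +
  prd  :: "'o \<Rightarrow> 'o \<Rightarrow> 'o"
  pr1  :: "'o \<Rightarrow> 'o \<Rightarrow> 'm"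
  pr2  :: "'o \<Rightarrow> 'o \<Rightarrow> 'm"
  tup  :: "'m \<Rightarrow> 'm \<Rightarrow> 'm"
  trm  :: "'o"
  bang :: "'o \<Rightarrow> 'm"

definition cprodm :: "('o,'m,'x) cart_scheme \<Rightarrow> 'o \<Rightarrow> 'o \<Rightarrow> 'm \<Rightarrow> 'm \<Rightarrow> 'm" where
  "cprodm K X Y h k = tup K (cmp K (pr1 K X Y) h) (cmp K (pr2 K X Y) k)"

definition is_cart :: "('o,'m,'x) cart_scheme \<Rightarrow> bool" where
  "is_cart K \<longleftrightarrow> is_cat K \<and>
    (\<forall>X. bang K X \<in> hom K X (trm K) \<and> (\<forall>h \<in> hom K X (trm K). h = bang K X)) \<and>
    (\<forall>X Y. pr1 K X Y \<in> hom K (prd K X Y) X \<and> pr2 K X Y \<in> hom K (prd K X Y) Y) \<and>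
    (\<forall>X Y Z f g. f \<in> hom K Z X \<longrightarrow> g \<in> hom K Z Y \<longrightarrow>
        tup K f g \<in> hom K Z (prd K X Y) \<and>
        cmp K (tup K f g) (pr1 K X Y) = f \<and> cmp K (tup K f g) (pr2 K X Y) = g \<and>
        (\<forall>h \<in> hom K Z (prd K X Y). cmp K h (pr1 K X Y) = f \<and> cmp K h (pr2 K X Y) = g
             \<longrightarrow> h = tup K f g)) \<and>
    \<comment> \<open>strictness of the cartesian monoidal structure\<close>
    (\<forall>X Y Z. prd K (prd K X Y) Z = prd K X (prd K Y Z)) \<and>
    (\<forall>X. prd K (trm K) X = X \<and> prd K X (trm K) = X) \<and>
    (\<forall>X Y Z. tup K (tup K (pr1 K X (prd K Y Z)) (cmp K (pr2 K X (prd K Y Z)) (pr1 K Y Z)))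
                     (cmp K (pr2 K X (prd K Y Z)) (pr2 K Y Z))
             = idt K (prd K X (prd K Y Z))) \<and>
    (\<forall>X. pr2 K (trm K) X = idt K X \<and> pr1 K X (trm K) = idt K X)"

section \<open>Additive strict symmetric monoidal category with finite (bi)products\<close>

record ('o,'m) asmc = "('o,'m) cat" +
  ten  :: "'o \<Rightarrow> 'o \<Rightarrow> 'o"
  tenm :: "'m \<Rightarrow> 'm \<Rightarrow> 'm"
  unt  :: "'o"
  sym  :: "'o \<Rightarrow> 'o \<Rightarrow> 'm"
  zer  :: "'o \<Rightarrow> 'o \<Rightarrow> 'm"
  pls  :: "'m \<Rightarrow> 'm \<Rightarrow> 'm"
  zob  :: "'o"
  bip  :: "'o \<Rightarrow> 'o \<Rightarrow> 'o"
  bpr1 :: "'o \<Rightarrow> 'o \<Rightarrow> 'm"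
  bpr2 :: "'o \<Rightarrow> 'o \<Rightarrow> 'm"
  bin1 :: "'o \<Rightarrow> 'o \<Rightarrow> 'm"
  bin2 :: "'o \<Rightarrow> 'o \<Rightarrow> 'm"

definition is_ssmc :: "('o,'m,'x) asmc_scheme \<Rightarrow> bool" where
  "is_ssmc K \<longleftrightarrow> is_cat K \<and>
    (\<forall>A B C D f g. f \<in> hom K A B \<longrightarrow> g \<in> hom K C D \<longrightarrow> tenm K f g \<in> hom K (ten K A C) (ten K B D)) \<and>
    (\<forall>A B. tenm K (idt K A) (idt K B) = idt K (ten K A B)) \<and>
    (\<forall>A B C A' B' C' f g f' g'. f \<in> hom K A B \<longrightarrow> g \<in> hom K B C \<longrightarrow>
        f' \<in> hom K A' B' \<longrightarrow> g' \<in> hom K B' C' \<longrightarrow>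
        tenm K (cmp K f g) (cmp K f' g') = cmp K (tenm K f f') (tenm K g g')) \<and>
    \<comment> \<open>strictness\<close>
    (\<forall>A B C. ten K (ten K A B) C = ten K A (ten K B C)) \<and>
    (\<forall>A. ten K (unt K) A = A \<and> ten K A (unt K) = A) \<and>
    (\<forall>A B C D E G f g h. f \<in> hom K A B \<longrightarrow> g \<in> hom K C D \<longrightarrow> h \<in> hom K E G \<longrightarrow>
        tenm K (tenm K f g) h = tenm K f (tenm K g h)) \<and>
    (\<forall>A B f. f \<in> hom K A B \<longrightarrow> tenm K (idt K (unt K)) f = f \<and> tenm K f (idt K (unt K)) = f) \<and>
    \<comment> \<open>symmetry\<close>
    (\<forall>A B. sym K A B \<in> hom K (ten K A B) (ten K B A)) \<and>
    (\<forall>A A' B B' f g. f \<in> hom K A A' \<longrightarrow> g \<in> hom K B B' \<longrightarrow>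
        cmp K (tenm K f g) (sym K A' B') = cmp K (sym K A B) (tenm K g f)) \<and>
    (\<forall>A B. cmp K (sym K A B) (sym K B A) = idt K (ten K A B)) \<and>
    (\<forall>A B C. sym K A (ten K B C) =
        cmp K (tenm K (sym K A B) (idt K C)) (tenm K (idt K B) (sym K A C)))"

definition is_additive :: "('o,'m,'x) asmc_scheme \<Rightarrow> bool" where
  "is_additive K \<longleftrightarrow>
    (\<forall>A B. zer K A B \<in> hom K A B) \<and>
    (\<forall>A B f g. f \<in> hom K A B \<longrightarrow> g \<in> hom K A B \<longrightarrow> pls K f g \<in> hom K A B) \<and>
    (\<forall>A B f g h. f \<in> hom K A B \<longrightarrow> g \<in> hom K A B \<longrightarrow> h \<in> hom K A B \<longrightarrow>
        pls K (pls K f g) h = pls K f (pls K g h)) \<and>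
    (\<forall>A B f g. f \<in> hom K A B \<longrightarrow> g \<in> hom K A B \<longrightarrow> pls K f g = pls K g f) \<and>
    (\<forall>A B f. f \<in> hom K A B \<longrightarrow> pls K f (zer K A B) = f) \<and>
    \<comment> \<open>composition is bilinear\<close>
    (\<forall>A B C f g g'. f \<in> hom K A B \<longrightarrow> g \<in> hom K B C \<longrightarrow> g' \<in> hom K B C \<longrightarrow>
        cmp K f (pls K g g') = pls K (cmp K f g) (cmp K f g') \<and>
        cmp K (pls K g g') (zer K C A) = zer K B A \<and>
        cmp K (zer K A B) g = zer K A C \<and> cmp K f (zer K B C) = zer K A C) \<and>
    (\<forall>A B C f f' g. f \<in> hom K A B \<longrightarrow> f' \<in> hom K A B \<longrightarrow> g \<in> hom K B C \<longrightarrow>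
        cmp K (pls K f f') g = pls K (cmp K f g) (cmp K f' g)) \<and>
    \<comment> \<open>tensor is bilinear\<close>
    (\<forall>A B C D f f' g. f \<in> hom K A B \<longrightarrow> f' \<in> hom K A B \<longrightarrow> g \<in> hom K C D \<longrightarrow>
        tenm K (pls K f f') g = pls K (tenm K f g) (tenm K f' g) \<and>
        tenm K g (pls K f f') = pls K (tenm K g f) (tenm K g f') \<and>
        tenm K (zer K A B) g = zer K (ten K A C) (ten K B D) \<and>
        tenm K g (zer K A B) = zer K (ten K C A) (ten K D B))"

definition has_biproducts :: "('o,'m,'x) asmc_scheme \<Rightarrow> bool" where
  "has_biproducts K \<longleftrightarrow>
    (\<forall>A h. h \<in> hom K A (zob K) \<longrightarrow> h = zer K A (zob K)) \<and>
    (\<forall>A B. bpr1 K A B \<in> hom K (bip K A B) A \<and> bpr2 K A B \<in> hom K (bip K A B) B \<and>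
           bin1 K A B \<in> hom K A (bip K A B) \<and> bin2 K A B \<in> hom K B (bip K A B)) \<and>
    (\<forall>A B C f g. f \<in> hom K C A \<longrightarrow> g \<in> hom K C B \<longrightarrow>
        (\<exists>!h. h \<in> hom K C (bip K A B) \<and> cmp K h (bpr1 K A B) = f \<and> cmp K h (bpr2 K A B) = g)) \<and>
    (\<forall>A B. cmp K (bin1 K A B) (bpr1 K A B) = idt K A \<and> cmp K (bin1 K A B) (bpr2 K A B) = zer K A B \<and>
           cmp K (bin2 K A B) (bpr2 K A B) = idt K B \<and> cmp K (bin2 K A B) (bpr1 K A B) = zer K B A \<and>
           pls K (cmp K (bpr1 K A B) (bin1 K A B)) (cmp K (bpr2 K A B) (bin2 K A B)) = idt K (bip K A B))"

section \<open>LNL adjunction + the functor T: data of a GDSC\<close>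

record ('c,'f,'l,'g) gdsc =
  CC  :: "('c,'f) cart"
  LL  :: "('l,'g) asmc"
  Fo  :: "'c \<Rightarrow> 'l"
  Fm  :: "'f \<Rightarrow> 'g"
  mF  :: "'c \<Rightarrow> 'c \<Rightarrow> 'g"
  mFi :: "'c \<Rightarrow> 'c \<Rightarrow> 'g"
  m1  :: "'g"
  m1i :: "'g"
  Uo  :: "'l \<Rightarrow> 'c"
  Um  :: "'g \<Rightarrow> 'f"
  nU  :: "'l \<Rightarrow> 'l \<Rightarrow> 'f"
  n1  :: "'f"
  eta :: "'c \<Rightarrow> 'f"
  eps :: "'l \<Rightarrow> 'g"
  lam :: "'c \<Rightarrow> 'l"          (* T(X) = (X, lam X) *)
  Tv  :: "'f \<Rightarrow> 'g"          (* T(g) = (g, Tv g) *)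

definition cswap :: "('c,'f,'l,'g) gdsc \<Rightarrow> 'c \<Rightarrow> 'c \<Rightarrow> 'f" where
  "cswap D X Y = tup (CC D) (pr2 (CC D) X Y) (pr1 (CC D) X Y)"

definition is_lnl :: "('c,'f,'l,'g) gdsc \<Rightarrow> bool" where
  "is_lnl D \<longleftrightarrow> (let C = CC D; L = LL D; F = Fo D; U = Uo D;
       cC = cmp C; cL = cmp L; xx = prd C; tt = ten L; tm = tenm L; I = trm C; one = unt L in
    is_cart C \<and> is_ssmc L \<and>
    is_functor C L F (Fm D) \<and> is_functor L C U (Um D) \<and>
    \<comment> \<open>F strong symmetric monoidal\<close>
    (\<forall>X Y. is_iso_pair L (tt (F X) (F Y)) (F (xx X Y)) (mF D X Y) (mFi D X Y)) \<and>
    is_iso_pair L one (F I) (m1 D) (m1i D) \<and>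
    (\<forall>X X' Y Y' f g. f \<in> hom C X X' \<longrightarrow> g \<in> hom C Y Y' \<longrightarrow>
        cL (tm (Fm D f) (Fm D g)) (mF D X' Y') = cL (mF D X Y) (Fm D (cprodm C X Y f g))) \<and>
    (\<forall>X Y Z. cL (tm (mF D X Y) (idt L (F Z))) (mF D (xx X Y) Z) =
             cL (tm (idt L (F X)) (mF D Y Z)) (mF D X (xx Y Z))) \<and>
    (\<forall>X. cL (tm (m1 D) (idt L (F X))) (mF D I X) = idt L (F X) \<and>
         cL (tm (idt L (F X)) (m1 D)) (mF D X I) = idt L (F X)) \<and>
    (\<forall>X Y. cL (mF D X Y) (Fm D (cswap D X Y)) = cL (sym L (F X) (F Y)) (mF D Y X)) \<and>
    \<comment> \<open>U lax symmetric monoidal\<close>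
    (\<forall>A B. nU D A B \<in> hom C (xx (U A) (U B)) (U (tt A B))) \<and>
    n1 D \<in> hom C I (U one) \<and>
    (\<forall>A A' B B' f g. f \<in> hom L A A' \<longrightarrow> g \<in> hom L B B' \<longrightarrow>
        cC (cprodm C (U A) (U B) (Um D f) (Um D g)) (nU D A' B') = cC (nU D A B) (Um D (tm f g))) \<and>
    (\<forall>A B E. cC (cprodm C (xx (U A) (U B)) (U E) (nU D A B) (idt C (U E))) (nU D (tt A B) E) =
             cC (cprodm C (U A) (xx (U B) (U E)) (idt C (U A)) (nU D B E)) (nU D A (tt B E))) \<and>
    (\<forall>A. cC (cprodm C I (U A) (n1 D) (idt C (U A))) (nU D one A) = idt C (U A) \<and>
         cC (cprodm C (U A) I (idt C (U A)) (n1 D)) (nU D A one) = idt C (U A)) \<and>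
    (\<forall>A B. cC (nU D A B) (Um D (sym L A B)) = cC (cswap D (U A) (U B)) (nU D B A)) \<and>
    \<comment> \<open>adjunction F -| U\<close>
    (\<forall>X. eta D X \<in> hom C X (U (F X))) \<and>
    (\<forall>A. eps D A \<in> hom L (F (U A)) A) \<and>
    (\<forall>X Y f. f \<in> hom C X Y \<longrightarrow> cC f (eta D Y) = cC (eta D X) (Um D (Fm D f))) \<and>
    (\<forall>A B g. g \<in> hom L A B \<longrightarrow> cL (Fm D (Um D g)) (eps D B) = cL (eps D A) g) \<and>
    (\<forall>X. cL (Fm D (eta D X)) (eps D (F X)) = idt L (F X)) \<and>
    (\<forall>A. cC (eta D (U A)) (Um D (eps D A)) = idt C (U A)) \<and>
    \<comment> \<open>the adjunction is monoidal: unit and counit are monoidal natural transformations\<close>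
    (\<forall>X Y. cC (cC (cprodm C X Y (eta D X) (eta D Y)) (nU D (F X) (F Y))) (Um D (mF D X Y))
           = eta D (xx X Y)) \<and>
    cC (n1 D) (Um D (m1 D)) = eta D I \<and>
    (\<forall>A B. cL (cL (mF D (U A) (U B)) (Fm D (nU D A B))) (eps D (tt A B)) = tm (eps D A) (eps D B)) \<and>
    cL (cL (m1 D) (Fm D (n1 D))) (eps D one) = idt L one)"

section \<open>The category LS(C)\<close>

definition cc :: "('c,'f,'l,'g) gdsc \<Rightarrow> 'c \<Rightarrow> 'g" where
  "cc D X = cmp (LL D) (Fm D (tup (CC D) (idt (CC D) X) (idt (CC D) X))) (mFi D X X)"

definition ww :: "('c,'f,'l,'g) gdsc \<Rightarrow> 'c \<Rightarrow> 'g" where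
  "ww D X = cmp (LL D) (Fm D (bang (CC D) X)) (m1i D)"

definition LShom :: "('c,'f,'l,'g) gdsc \<Rightarrow> 'c \<times> 'l \<Rightarrow> 'c \<times> 'l \<Rightarrow> ('f \<times> 'g) set" where
  "LShom D XA YB = {(f,u). f \<in> hom (CC D) (fst XA) (fst YB) \<and>
                           u \<in> hom (LL D) (ten (LL D) (Fo D (fst XA)) (snd XA)) (snd YB)}"

definition LScomp :: "('c,'f,'l,'g) gdsc \<Rightarrow> 'c \<times> 'l \<Rightarrow> 'f \<times> 'g \<Rightarrow> 'f \<times> 'g \<Rightarrow> 'f \<times> 'g" where
  "LScomp D XA fu gv = (cmp (CC D) (fst fu) (fst gv),
     cmp (LL D) (cmp (LL D) (tenm (LL D) (cc D (fst XA)) (idt (LL D) (snd XA)))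
                            (tenm (LL D) (Fm D (fst fu)) (snd fu))) (snd gv))"

definition LSid :: "('c,'f,'l,'g) gdsc \<Rightarrow> 'c \<times> 'l \<Rightarrow> 'f \<times> 'g" where
  "LSid D XA = (idt (CC D) (fst XA), tenm (LL D) (ww D (fst XA)) (idt (LL D) (snd XA)))"

definition LSinv :: "('c,'f,'l,'g) gdsc \<Rightarrow> 'c \<times> 'l \<Rightarrow> 'c \<times> 'l \<Rightarrow> 'f \<times> 'g \<Rightarrow> 'f \<times> 'g" where
  "LSinv D XA YB h = (THE k. k \<in> LShom D YB XA \<and> LScomp D XA h k = LSid D XA \<and> LScomp D YB k h = LSid D YB)"

definition LSiso :: "('c,'f,'l,'g) gdsc \<Rightarrow> 'c \<times> 'l \<Rightarrow> 'c \<times> 'l \<Rightarrow> 'f \<times> 'g \<Rightarrow> bool" where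
  "LSiso D XA YB h \<longleftrightarrow> h \<in> LShom D XA YB \<and>
     (\<exists>k. k \<in> LShom D YB XA \<and> LScomp D XA h k = LSid D XA \<and> LScomp D YB k h = LSid D YB)"

(* reindexing h^*(id_X, v) along h : X' -> X of a fibre morphism (X,B) -> (X,E) *)
definition reindex :: "('c,'f,'l,'g) gdsc \<Rightarrow> 'c \<Rightarrow> 'f \<Rightarrow> 'l \<Rightarrow> 'f \<times> 'g \<Rightarrow> 'f \<times> 'g" where
  "reindex D X' h B idv = (idt (CC D) X', cmp (LL D) (tenm (LL D) (Fm D h) (idt (LL D) B)) (snd idv))"

definition LSinj2 :: "('c,'f,'l,'g) gdsc \<Rightarrow> 'c \<Rightarrow> 'l \<Rightarrow> 'l \<Rightarrow> 'f \<times> 'g" where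
  "LSinj2 D X A B = (idt (CC D) X, tenm (LL D) (ww D X) (bin2 (LL D) A B))"

definition LSproj1 :: "('c,'f,'l,'g) gdsc \<Rightarrow> 'c \<Rightarrow> 'c \<Rightarrow> 'l \<Rightarrow> 'l \<Rightarrow> 'f \<times> 'g" where
  "LSproj1 D X Y A B = (pr1 (CC D) X Y, tenm (LL D) (ww D (prd (CC D) X Y)) (bpr1 (LL D) A B))"

definition LSproj2 :: "('c,'f,'l,'g) gdsc \<Rightarrow> 'c \<Rightarrow> 'c \<Rightarrow> 'l \<Rightarrow> 'l \<Rightarrow> 'f \<times> 'g" where
  "LSproj2 D X Y A B = (pr2 (CC D) X Y, tenm (LL D) (ww D (prd (CC D) X Y)) (bpr2 (LL D) A B))"

definition Tob :: "('c,'f,'l,'g) gdsc \<Rightarrow> 'c \<Rightarrow> 'c \<times> 'l" where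
  "Tob D X = (X, lam D X)"

definition Tmor :: "('c,'f,'l,'g) gdsc \<Rightarrow> 'f \<Rightarrow> 'f \<times> 'g" where
  "Tmor D g = (g, Tv D g)"

definition phi :: "('c,'f,'l,'g) gdsc \<Rightarrow> 'c \<Rightarrow> 'c \<Rightarrow> 'f \<times> 'g" where
  "phi D X Y = (THE h. h \<in> LShom D (Tob D (prd (CC D) X Y)) (prd (CC D) X Y, bip (LL D) (lam D X) (lam D Y)) \<and>
      LScomp D (Tob D (prd (CC D) X Y)) h (LSproj1 D X Y (lam D X) (lam D Y)) = Tmor D (pr1 (CC D) X Y) \<and>
      LScomp D (Tob D (prd (CC D) X Y)) h (LSproj2 D X Y (lam D X) (lam D Y)) = Tmor D (pr2 (CC D) X Y))"

definition i2 :: "('c,'f,'l,'g) gdsc \<Rightarrow> 'c \<Rightarrow> 'c \<Rightarrow> 'f \<times> 'g" where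
  "i2 D X Y = LScomp D (prd (CC D) X Y, lam D Y)
      (LSinj2 D (prd (CC D) X Y) (lam D X) (lam D Y))
      (LSinv D (Tob D (prd (CC D) X Y)) (prd (CC D) X Y, bip (LL D) (lam D X) (lam D Y)) (phi D X Y))"

definition compr :: "('c,'f,'l,'g) gdsc \<Rightarrow> 'c \<Rightarrow> 'l \<Rightarrow> 'f \<Rightarrow> 'g \<Rightarrow> 'f" where
  "compr D X A f u = tup (CC D) (cmp (CC D) (pr1 (CC D) X (Uo D A)) f)
      (cmp (CC D) (cmp (CC D) (cprodm (CC D) X (Uo D A) (eta D X) (idt (CC D) (Uo D A)))
                              (nU D (Fo D X) A)) (Um D u))"

definition Wk :: "('c,'f,'l,'g) gdsc \<Rightarrow> 'c \<Rightarrow> 'l \<Rightarrow> 'f \<Rightarrow> 'g \<Rightarrow> 'f \<times> 'g" where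
  "Wk D X A f u = (compr D X A f u,
      cmp (LL D) (tenm (LL D) (Fm D (pr1 (CC D) X (Uo D A))) (idt (LL D) A)) u)"

definition Dm :: "('c,'f,'l,'g) gdsc \<Rightarrow> 'c \<Rightarrow> 'f \<Rightarrow> 'f \<times> 'g" where
  "Dm D X g = (idt (CC D) X, Tv D g)"

definition D2 :: "('c,'f,'l,'g) gdsc \<Rightarrow> 'c \<Rightarrow> 'c \<Rightarrow> 'f \<Rightarrow> 'f \<times> 'g" where
  "D2 D X Y g = LScomp D (prd (CC D) X Y, lam D Y) (i2 D X Y) (Dm D (prd (CC D) X Y) g)"

definition is_gdsc :: "('c,'f,'l,'g) gdsc \<Rightarrow> bool" where
  "is_gdsc D \<longleftrightarrow> is_lnl D \<and> is_additive (LL D) \<and> has_biproducts (LL D) \<and>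
    \<comment> \<open>T is a functor C -> LS(C) with ls o T = id\<close>
    (\<forall>X Y g. g \<in> hom (CC D) X Y \<longrightarrow> Tmor D g \<in> LShom D (Tob D X) (Tob D Y)) \<and>
    (\<forall>X. Tmor D (idt (CC D) X) = LSid D (Tob D X)) \<and>
    (\<forall>X Y Z f g. f \<in> hom (CC D) X Y \<longrightarrow> g \<in> hom (CC D) Y Z \<longrightarrow>
        Tmor D (cmp (CC D) f g) = LScomp D (Tob D X) (Tmor D f) (Tmor D g)) \<and>
    \<comment> \<open>(t.1)\<close>
    (\<forall>X Y. LSiso D (Tob D (prd (CC D) X Y)) (prd (CC D) X Y, bip (LL D) (lam D X) (lam D Y)) (phi D X Y)) \<and>
    \<comment> \<open>(t.2)\<close>
    (\<forall>A. lam D (Uo D A) = A) \<and>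
    \<comment> \<open>(t.3)\<close>
    (\<forall>X Y A B f u. f \<in> hom (CC D) X Y \<longrightarrow> u \<in> hom (LL D) (ten (LL D) (Fo D X) A) B \<longrightarrow>
        LScomp D (prd (CC D) X (Uo D A), A) (Wk D X A f u) (i2 D Y (Uo D B)) =
        LScomp D (prd (CC D) X (Uo D A), lam D (Uo D A)) (i2 D X (Uo D A)) (Tmor D (compr D X A f u)))"

end

theory Submission
  imports Defs
begin

text \<open>
  Composition in \<open>LS(C)\<close> splits off the base: \<open>(h,v);(k,w)\<close> has base \<open>h;k\<close> and
  fibre part \<open>(id,v)\<close> composed in the fibre over the domain with the reindexed \<open>h\<^sup>*(id,w)\<close>.
  The morphisms \<open>i\<^sub>2\<close> are vertical (their base component is an identity), so applying
  this splitting to both sides of axiom (t.3) yields the claimed identity as an equation of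
  fibre parts.
  Verticality of \<open>i\<^sub>2\<close> is the substantial part: \<open>i\<^sub>2\<close> is built from \<open>\<phi>\<close> and its inverse, both
  given by definite descriptions, so one needs the universal property of the biproduct and the
  uniqueness of inverses in a fibre. The fibres are the coKleisli categories of the comonads
  \<open>F X \<otimes> -\<close>, whose category laws come from the comonoid laws of the diagonal and the
  terminal map transported along the strong monoidal functor \<open>F\<close>.
\<close>

locale category =
  fixes K :: "('o,'m,'x) cat_scheme"
  assumes category: "is_cat K"
begin

lemma idt_hom [intro]: "idt K X \<in> hom K X X"
  using category unfolding is_cat_def by blast

lemma cmp_hom [intro]: "f \<in> hom K X Y \<Longrightarrow> g \<in> hom K Y Z \<Longrightarrow> cmp K f g \<in> hom K X Z"
  using category unfolding is_cat_def by blast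

lemma cmp_idt_left [simp]: "f \<in> hom K X Y \<Longrightarrow> cmp K (idt K X) f = f"
  using category unfolding is_cat_def by simp

lemma cmp_idt_right [simp]: "f \<in> hom K X Y \<Longrightarrow> cmp K f (idt K Y) = f"
  using category unfolding is_cat_def by simp

lemma cmp_assoc:
  "f \<in> hom K W X \<Longrightarrow> g \<in> hom K X Y \<Longrightarrow> h \<in> hom K Y Z \<Longrightarrow>
    cmp K (cmp K f g) h = cmp K f (cmp K g h)"
  using category unfolding is_cat_def by simp

lemma cmp_idt_idt [simp]: "cmp K (idt K X) (idt K X) = idt K X"
  using cmp_idt_left[OF idt_hom] .

lemma iso_pair_idt: "is_iso_pair K X X (idt K X) (idt K X)"
  unfolding is_iso_pair_def by auto

lemma iso_pair_comp:
  assumes "is_iso_pair K X Y f f'" and "is_iso_pair K Y Z g g'"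
  shows "is_iso_pair K X Z (cmp K f g) (cmp K g' f')"
proof -
  have hom: "f \<in> hom K X Y" "f' \<in> hom K Y X" "g \<in> hom K Y Z" "g' \<in> hom K Z Y"
    and inv: "cmp K f f' = idt K X" "cmp K f' f = idt K Y" "cmp K g g' = idt K Y" "cmp K g' g = idt K Z"
    using assms unfolding is_iso_pair_def by auto
  have "cmp K (cmp K f g) (cmp K g' f') = cmp K f (cmp K (cmp K g g') f')"
    using hom cmp_hom[OF hom(4,2)] cmp_hom[OF hom(3,4)] by (simp add: cmp_assoc)
  moreover have "cmp K (cmp K g' f') (cmp K f g) = cmp K g' (cmp K (cmp K f' f) g)"
    using hom cmp_hom[OF hom(1,3)] cmp_hom[OF hom(2,1)] by (simp add: cmp_assoc)
  ultimately show ?thesis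
    using hom inv unfolding is_iso_pair_def by (auto intro: cmp_hom)
qed

lemma iso_pair_left_inverse:
  assumes "is_iso_pair K X Y f g" and h: "h \<in> hom K Y X" and "cmp K h f = idt K Y"
  shows "h = g"
proof -
  have f: "f \<in> hom K X Y" and g: "g \<in> hom K Y X" and fg: "cmp K f g = idt K X"
    using assms(1) unfolding is_iso_pair_def by auto
  have "h = cmp K h (cmp K f g)" using h by (simp add: fg)
  also have "\<dots> = g" using cmp_assoc[OF h f g] g by (simp add: assms(3))
  finally show ?thesis .
qed

lemma iso_pair_inverse_unique:
  "is_iso_pair K X Y f g \<Longrightarrow> is_iso_pair K X Y f g' \<Longrightarrow> g' = g"
  by (rule iso_pair_left_inverse) (auto simp: is_iso_pair_def)

lemma iso_pair_conjugate:
  assumes f: "is_iso_pair K A B f f'" and g: "is_iso_pair K C E g g'"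
    and h: "h \<in> hom K A C" and k: "k \<in> hom K B E" and sq: "cmp K f k = cmp K h g"
  shows "cmp K f' h = cmp K k g'"
proof -
  have hom: "f \<in> hom K A B" "f' \<in> hom K B A" "g \<in> hom K C E" "g' \<in> hom K E C"
    and inv: "cmp K f' f = idt K B" "cmp K g g' = idt K C"
    using f g unfolding is_iso_pair_def by auto
  have "cmp K f' h = cmp K f' (cmp K (cmp K h g) g')"
    using h hom by (simp add: cmp_assoc inv)
  also have "\<dots> = cmp K (cmp K f' f) (cmp K k g')"
    using h k hom cmp_hom[OF k hom(4)] by (simp add: cmp_assoc sq[symmetric])
  also have "\<dots> = cmp K k g'" using cmp_hom[OF k hom(4)] by (simp add: inv)
  finally show ?thesis .
qed

end

locale symmetric_monoidal_category =
  fixes K :: "('o,'m,'x) asmc_scheme"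
  assumes monoidal: "is_ssmc K"

sublocale symmetric_monoidal_category \<subseteq> category
  using monoidal unfolding is_ssmc_def by unfold_locales simp

context symmetric_monoidal_category
begin

lemma tenm_hom [intro]:
  "f \<in> hom K A B \<Longrightarrow> g \<in> hom K C E \<Longrightarrow> tenm K f g \<in> hom K (ten K A C) (ten K B E)"
  using monoidal unfolding is_ssmc_def by simp

lemma tenm_idt [simp]: "tenm K (idt K A) (idt K B) = idt K (ten K A B)"
  using monoidal unfolding is_ssmc_def by simp

lemma tenm_cmp:
  "f \<in> hom K A B \<Longrightarrow> g \<in> hom K B C \<Longrightarrow> f' \<in> hom K A' B' \<Longrightarrow> g' \<in> hom K B' C' \<Longrightarrow>
    tenm K (cmp K f g) (cmp K f' g') = cmp K (tenm K f f') (tenm K g g')"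
  using monoidal unfolding is_ssmc_def by simp

lemma ten_assoc [simp]: "ten K (ten K A B) C = ten K A (ten K B C)"
  using monoidal unfolding is_ssmc_def by simp

lemma ten_unt [simp]: "ten K (unt K) A = A" "ten K A (unt K) = A"
  using monoidal unfolding is_ssmc_def by simp_all

lemma tenm_assoc:
  "f \<in> hom K A B \<Longrightarrow> g \<in> hom K C E \<Longrightarrow> h \<in> hom K E' G \<Longrightarrow>
    tenm K (tenm K f g) h = tenm K f (tenm K g h)"
  using monoidal unfolding is_ssmc_def by simp

lemma tenm_unt_left [simp]: "f \<in> hom K A B \<Longrightarrow> tenm K (idt K (unt K)) f = f"
  using monoidal unfolding is_ssmc_def by simp

lemma iso_pair_tenm:
  assumes f: "is_iso_pair K A B f f'" and g: "is_iso_pair K C E g g'"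
  shows "is_iso_pair K (ten K A C) (ten K B E) (tenm K f g) (tenm K f' g')"
  using f g unfolding is_iso_pair_def by (auto simp: tenm_cmp[symmetric])

end

locale cartesian_category =
  fixes K :: "('o,'m,'x) cart_scheme"
  assumes cartesian: "is_cart K"

sublocale cartesian_category \<subseteq> category
  using cartesian unfolding is_cart_def by unfold_locales simp

context cartesian_category
begin

lemma pr_hom [intro]:
  "pr1 K X Y \<in> hom K (prd K X Y) X" "pr2 K X Y \<in> hom K (prd K X Y) Y"
  using cartesian unfolding is_cart_def by simp_all

lemma tup_hom [intro]: "f \<in> hom K Z X \<Longrightarrow> g \<in> hom K Z Y \<Longrightarrow> tup K f g \<in> hom K Z (prd K X Y)"
  using cartesian unfolding is_cart_def by simp

lemma tup_pr [simp]:
  "f \<in> hom K Z X \<Longrightarrow> g \<in> hom K Z Y \<Longrightarrow> cmp K (tup K f g) (pr1 K X Y) = f"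
  "f \<in> hom K Z X \<Longrightarrow> g \<in> hom K Z Y \<Longrightarrow> cmp K (tup K f g) (pr2 K X Y) = g"
  using cartesian unfolding is_cart_def by simp_all

lemma tup_unique:
  "h \<in> hom K Z (prd K X Y) \<Longrightarrow> f \<in> hom K Z X \<Longrightarrow> g \<in> hom K Z Y \<Longrightarrow>
    cmp K h (pr1 K X Y) = f \<Longrightarrow> cmp K h (pr2 K X Y) = g \<Longrightarrow> h = tup K f g"
  using cartesian unfolding is_cart_def by simp

lemma bang_hom [intro]: "bang K X \<in> hom K X (trm K)"
  using cartesian unfolding is_cart_def by simp

lemma prd_assoc [simp]: "prd K (prd K X Y) Z = prd K X (prd K Y Z)"
  using cartesian unfolding is_cart_def by simp

lemma prd_trm [simp]: "prd K (trm K) X = X" "prd K X (trm K) = X"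
  using cartesian unfolding is_cart_def by simp_all

lemma pr_trm [simp]: "pr2 K (trm K) X = idt K X" "pr1 K X (trm K) = idt K X"
  using cartesian unfolding is_cart_def by simp_all

lemma tup_pr_assoc:
  "tup K (tup K (pr1 K X (prd K Y Z)) (cmp K (pr2 K X (prd K Y Z)) (pr1 K Y Z)))
         (cmp K (pr2 K X (prd K Y Z)) (pr2 K Y Z))
   = idt K (prd K X (prd K Y Z))"
  using cartesian unfolding is_cart_def by simp

lemma tup_pr_idt: "tup K (pr1 K X Y) (pr2 K X Y) = idt K (prd K X Y)"
  by (rule tup_unique[symmetric]) (use pr_hom[of X Y] in auto)

lemma cmp_tup:
  assumes h: "h \<in> hom K W Z" and f: "f \<in> hom K Z X" and g: "g \<in> hom K Z Y"
  shows "cmp K h (tup K f g) = tup K (cmp K h f) (cmp K h g)"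
  using h f g tup_hom[OF f g] pr_hom[of X Y] by (intro tup_unique) (auto simp: cmp_assoc)

lemma cprodm_hom [intro]:
  "h \<in> hom K X X' \<Longrightarrow> k \<in> hom K Y Y' \<Longrightarrow> cprodm K X Y h k \<in> hom K (prd K X Y) (prd K X' Y')"
  unfolding cprodm_def by auto

lemma tup_cprodm:
  assumes f: "f \<in> hom K Z X" and g: "g \<in> hom K Z Y" and h: "h \<in> hom K X X'" and k: "k \<in> hom K Y Y'"
  shows "cmp K (tup K f g) (cprodm K X Y h k) = tup K (cmp K f h) (cmp K g k)"
  using f g h k unfolding cprodm_def
  by (subst cmp_tup) (auto simp: cmp_assoc[symmetric, OF tup_hom[OF f g] pr_hom(1) h]
                                 cmp_assoc[symmetric, OF tup_hom[OF f g] pr_hom(2) k])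

lemma tup_bang_left: "f \<in> hom K Z X \<Longrightarrow> tup K (bang K Z) f = f"
  using tup_pr(2)[of "bang K Z" Z "trm K" f X] tup_hom[of "bang K Z" Z "trm K" f X] bang_hom by simp

lemma tup_bang_right: "f \<in> hom K Z X \<Longrightarrow> tup K f (bang K Z) = f"
  using tup_pr(1)[of f Z X "bang K Z" "trm K"] tup_hom[of f Z X "bang K Z" "trm K"] bang_hom by simp

lemma pr_prd_assoc:
  "pr1 K (prd K X Y) Z = tup K (pr1 K X (prd K Y Z)) (cmp K (pr2 K X (prd K Y Z)) (pr1 K Y Z))"
  "pr2 K (prd K X Y) Z = cmp K (pr2 K X (prd K Y Z)) (pr2 K Y Z)"
proof -
  let ?a = "tup K (pr1 K X (prd K Y Z)) (cmp K (pr2 K X (prd K Y Z)) (pr1 K Y Z))"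
  let ?b = "cmp K (pr2 K X (prd K Y Z)) (pr2 K Y Z)"
  have a: "?a \<in> hom K (prd K X (prd K Y Z)) (prd K X Y)" and b: "?b \<in> hom K (prd K X (prd K Y Z)) Z"
    by auto
  have "pr1 K (prd K X Y) Z = cmp K (tup K ?a ?b) (pr1 K (prd K X Y) Z)"
    using pr_hom(1)[of "prd K X Y" Z] by (simp add: tup_pr_assoc)
  then show "pr1 K (prd K X Y) Z = ?a" using tup_pr(1)[OF a b] by simp
  have "pr2 K (prd K X Y) Z = cmp K (tup K ?a ?b) (pr2 K (prd K X Y) Z)"
    using pr_hom(2)[of "prd K X Y" Z] by (simp add: tup_pr_assoc)
  then show "pr2 K (prd K X Y) Z = ?b" using tup_pr(2)[OF a b] by simp
qed

lemma tup_assoc: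
  assumes f: "f \<in> hom K W X" and g: "g \<in> hom K W Y" and h: "h \<in> hom K W Z"
  shows "tup K (tup K f g) h = tup K f (tup K g h)"
proof (rule tup_unique[symmetric])
  let ?r = "tup K f (tup K g h)"
  have r: "?r \<in> hom K W (prd K X (prd K Y Z))" using f g h by auto
  then show "?r \<in> hom K W (prd K (prd K X Y) Z)" by simp
  show "cmp K ?r (pr1 K (prd K X Y) Z) = tup K f g"
    unfolding pr_prd_assoc using f g h
    by (simp add: cmp_tup[OF r pr_hom(1) cmp_hom[OF pr_hom(2) pr_hom(1)]]
        cmp_assoc[symmetric, OF r pr_hom(2) pr_hom(1)] tup_hom)
  show "cmp K ?r (pr2 K (prd K X Y) Z) = h"
    unfolding pr_prd_assoc using f g h
    by (simp add: cmp_assoc[symmetric, OF r pr_hom(2) pr_hom(2)] tup_hom)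
qed (use f g h in auto)

end

locale lnl_adjunction =
  fixes D :: "('c,'f,'l,'g) gdsc"
  assumes lnl: "is_lnl D"

sublocale lnl_adjunction \<subseteq> C: cartesian_category "CC D"
  using lnl unfolding is_lnl_def Let_def by unfold_locales simp

sublocale lnl_adjunction \<subseteq> L: symmetric_monoidal_category "LL D"
  using lnl unfolding is_lnl_def Let_def by unfold_locales simp

context lnl_adjunction
begin

abbreviation homC where "homC \<equiv> hom (CC D)"
abbreviation homL where "homL \<equiv> hom (LL D)"
abbreviation idC where "idC \<equiv> idt (CC D)"
abbreviation idL where "idL \<equiv> idt (LL D)"
abbreviation cmpC (infixl "\<bullet>" 55) where "f \<bullet> g \<equiv> cmp (CC D) f g"
abbreviation cmpL (infixl "\<cdot>" 55) where "f \<cdot> g \<equiv> cmp (LL D) f g"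
abbreviation tenmL (infixl "\<otimes>" 60) where "f \<otimes> g \<equiv> tenm (LL D) f g"
abbreviation tenL (infixr "\<odot>" 60) where "A \<odot> B \<equiv> ten (LL D) A B"
abbreviation prdC (infixr "\<times>\<^sub>C" 60) where "X \<times>\<^sub>C Y \<equiv> prd (CC D) X Y"
abbreviation diag where "diag X \<equiv> tup (CC D) (idC X) (idC X)"

lemma F_functor: "is_functor (CC D) (LL D) (Fo D) (Fm D)"
  using lnl unfolding is_lnl_def Let_def by simp

lemma F_hom [intro]: "f \<in> homC X Y \<Longrightarrow> Fm D f \<in> homL (Fo D X) (Fo D Y)"
  using F_functor unfolding is_functor_def by simp

lemma F_idt [simp]: "Fm D (idC X) = idL (Fo D X)"
  using F_functor unfolding is_functor_def by simp

lemma F_cmp: "f \<in> homC X Y \<Longrightarrow> g \<in> homC Y Z \<Longrightarrow> Fm D (f \<bullet> g) = Fm D f \<cdot> Fm D g"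
  using F_functor unfolding is_functor_def by simp

lemma U_hom [intro]: "g \<in> homL A B \<Longrightarrow> Um D g \<in> homC (Uo D A) (Uo D B)"
  using lnl unfolding is_lnl_def Let_def is_functor_def by simp

lemma nU_hom [intro]: "nU D A B \<in> homC (Uo D A \<times>\<^sub>C Uo D B) (Uo D (A \<odot> B))"
  using lnl unfolding is_lnl_def Let_def by simp

lemma eta_hom [intro]: "eta D X \<in> homC X (Uo D (Fo D X))"
  using lnl unfolding is_lnl_def Let_def by simp

lemma mF_iso_pair: "is_iso_pair (LL D) (Fo D X \<odot> Fo D Y) (Fo D (X \<times>\<^sub>C Y)) (mF D X Y) (mFi D X Y)"
  using lnl unfolding is_lnl_def Let_def by simp

lemma m1_iso_pair: "is_iso_pair (LL D) (unt (LL D)) (Fo D (trm (CC D))) (m1 D) (m1i D)"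
  using lnl unfolding is_lnl_def Let_def by simp

lemma mF_hom [intro]:
  "mF D X Y \<in> homL (Fo D X \<odot> Fo D Y) (Fo D (X \<times>\<^sub>C Y))"
  "mFi D X Y \<in> homL (Fo D (X \<times>\<^sub>C Y)) (Fo D X \<odot> Fo D Y)"
  using mF_iso_pair unfolding is_iso_pair_def by simp_all

lemma m1_hom [intro]:
  "m1 D \<in> homL (unt (LL D)) (Fo D (trm (CC D)))" "m1i D \<in> homL (Fo D (trm (CC D))) (unt (LL D))"
  using m1_iso_pair unfolding is_iso_pair_def by simp_all

lemma m1_inverse: "m1 D \<cdot> m1i D = idL (unt (LL D))"
  using m1_iso_pair unfolding is_iso_pair_def by simp

lemma mF_natural:
  "f \<in> homC X X' \<Longrightarrow> g \<in> homC Y Y' \<Longrightarrow>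
    (Fm D f \<otimes> Fm D g) \<cdot> mF D X' Y' = mF D X Y \<cdot> Fm D (cprodm (CC D) X Y f g)"
  using lnl unfolding is_lnl_def Let_def by simp

lemma mF_assoc:
  "(mF D X Y \<otimes> idL (Fo D Z)) \<cdot> mF D (X \<times>\<^sub>C Y) Z = (idL (Fo D X) \<otimes> mF D Y Z) \<cdot> mF D X (Y \<times>\<^sub>C Z)"
  using lnl unfolding is_lnl_def Let_def by simp

lemma mF_unit:
  "(m1 D \<otimes> idL (Fo D X)) \<cdot> mF D (trm (CC D)) X = idL (Fo D X)"
  "(idL (Fo D X) \<otimes> m1 D) \<cdot> mF D X (trm (CC D)) = idL (Fo D X)"
  using lnl unfolding is_lnl_def Let_def by simp_all

lemma mFi_natural:
  assumes f: "f \<in> homC X X'" and g: "g \<in> homC Y Y'"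
  shows "mFi D X Y \<cdot> (Fm D f \<otimes> Fm D g) = Fm D (cprodm (CC D) X Y f g) \<cdot> mFi D X' Y'"
  using f g by (intro L.iso_pair_conjugate[OF mF_iso_pair mF_iso_pair]) (auto simp: mF_natural)

lemma mFi_assoc:
  "mFi D (X \<times>\<^sub>C Y) Z \<cdot> (mFi D X Y \<otimes> idL (Fo D Z)) = mFi D X (Y \<times>\<^sub>C Z) \<cdot> (idL (Fo D X) \<otimes> mFi D Y Z)"
proof (rule L.iso_pair_inverse_unique)
  show "is_iso_pair (LL D) (Fo D X \<odot> Fo D Y \<odot> Fo D Z) (Fo D (X \<times>\<^sub>C Y \<times>\<^sub>C Z))
      ((idL (Fo D X) \<otimes> mF D Y Z) \<cdot> mF D X (Y \<times>\<^sub>C Z)) (mFi D X (Y \<times>\<^sub>C Z) \<cdot> (idL (Fo D X) \<otimes> mFi D Y Z))"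
    using L.iso_pair_comp[OF L.iso_pair_tenm[OF L.iso_pair_idt mF_iso_pair] mF_iso_pair] by simp
  show "is_iso_pair (LL D) (Fo D X \<odot> Fo D Y \<odot> Fo D Z) (Fo D (X \<times>\<^sub>C Y \<times>\<^sub>C Z))
      ((idL (Fo D X) \<otimes> mF D Y Z) \<cdot> mF D X (Y \<times>\<^sub>C Z)) (mFi D (X \<times>\<^sub>C Y) Z \<cdot> (mFi D X Y \<otimes> idL (Fo D Z)))"
    using L.iso_pair_comp[OF L.iso_pair_tenm[OF mF_iso_pair L.iso_pair_idt] mF_iso_pair]
    by (simp add: mF_assoc)
qed

lemma mFi_unit:
  "mFi D (trm (CC D)) X = m1 D \<otimes> idL (Fo D X)"
  "mFi D X (trm (CC D)) = idL (Fo D X) \<otimes> m1 D"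
proof -
  show "mFi D (trm (CC D)) X = m1 D \<otimes> idL (Fo D X)"
    using L.iso_pair_left_inverse[OF mF_iso_pair, of "m1 D \<otimes> idL (Fo D X)" "trm (CC D)" X]
      L.tenm_hom[OF m1_hom(1) L.idt_hom] mF_unit(1) by simp
  show "mFi D X (trm (CC D)) = idL (Fo D X) \<otimes> m1 D"
    using L.iso_pair_left_inverse[OF mF_iso_pair, of "idL (Fo D X) \<otimes> m1 D" X "trm (CC D)"]
      L.tenm_hom[OF L.idt_hom m1_hom(1)] mF_unit(2) by simp
qed

lemma cc_hom [intro]: "cc D X \<in> homL (Fo D X) (Fo D X \<odot> Fo D X)"
  unfolding cc_def by blast

lemma ww_hom [intro]: "ww D X \<in> homL (Fo D X) (unt (LL D))"
  unfolding ww_def by blast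

lemma cc_cmp_tenm:
  assumes f: "f \<in> homC X Y" and g: "g \<in> homC X Z" and a: "a \<in> homL (Fo D Y) A" and b: "b \<in> homL (Fo D Z) B"
  shows "cc D X \<cdot> ((Fm D f \<cdot> a) \<otimes> (Fm D g \<cdot> b)) = Fm D (tup (CC D) f g) \<cdot> (mFi D Y Z \<cdot> (a \<otimes> b))"
proof -
  have hom: "Fm D (diag X) \<in> homL (Fo D X) (Fo D (X \<times>\<^sub>C X))"
    "Fm D f \<otimes> Fm D g \<in> homL (Fo D X \<odot> Fo D X) (Fo D Y \<odot> Fo D Z)"
    "a \<otimes> b \<in> homL (Fo D Y \<odot> Fo D Z) (A \<odot> B)"
    "Fm D (cprodm (CC D) X X f g) \<in> homL (Fo D (X \<times>\<^sub>C X)) (Fo D (Y \<times>\<^sub>C Z))"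
    using f g a b by auto
  have "cc D X \<cdot> ((Fm D f \<cdot> a) \<otimes> (Fm D g \<cdot> b)) = Fm D (diag X) \<cdot> ((mFi D X X \<cdot> (Fm D f \<otimes> Fm D g)) \<cdot> (a \<otimes> b))"
    using hom mF_hom(2)[of X X] L.cmp_hom[OF hom(2,3)] L.cmp_hom[OF mF_hom(2) hom(2)]
    unfolding cc_def L.tenm_cmp[OF F_hom[OF f] a F_hom[OF g] b] by (simp add: L.cmp_assoc)
  also have "\<dots> = (Fm D (diag X) \<cdot> Fm D (cprodm (CC D) X X f g)) \<cdot> (mFi D Y Z \<cdot> (a \<otimes> b))"
    using hom mF_hom(2)[of Y Z] L.cmp_hom[OF mF_hom(2) hom(3)]
    by (simp add: mFi_natural[OF f g] L.cmp_assoc)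
  also have "\<dots> = Fm D (tup (CC D) f g) \<cdot> (mFi D Y Z \<cdot> (a \<otimes> b))"
    using C.tup_cprodm[OF C.idt_hom C.idt_hom f g] F_cmp[OF C.tup_hom[OF C.idt_hom C.idt_hom] C.cprodm_hom[OF f g]]
      f g by simp
  finally show ?thesis .
qed

lemma cc_counit:
  "cc D X \<cdot> (ww D X \<otimes> idL (Fo D X)) = idL (Fo D X)"
  "cc D X \<cdot> (idL (Fo D X) \<otimes> ww D X) = idL (Fo D X)"
proof -
  have "ww D X \<otimes> idL (Fo D X) = (Fm D (bang (CC D) X) \<cdot> m1i D) \<otimes> (Fm D (idC X) \<cdot> idL (Fo D X))"
    by (simp add: ww_def)
  moreover have "mFi D (trm (CC D)) X \<cdot> (m1i D \<otimes> idL (Fo D X)) = idL (Fo D X)"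
    using L.tenm_cmp[OF m1_hom L.idt_hom L.idt_hom] by (simp add: mFi_unit m1_inverse)
  ultimately show "cc D X \<cdot> (ww D X \<otimes> idL (Fo D X)) = idL (Fo D X)"
    using cc_cmp_tenm[OF C.bang_hom C.idt_hom m1_hom(2) L.idt_hom] C.tup_bang_left[OF C.idt_hom] by simp
  have "idL (Fo D X) \<otimes> ww D X = (Fm D (idC X) \<cdot> idL (Fo D X)) \<otimes> (Fm D (bang (CC D) X) \<cdot> m1i D)"
    by (simp add: ww_def)
  moreover have "mFi D X (trm (CC D)) \<cdot> (idL (Fo D X) \<otimes> m1i D) = idL (Fo D X)"
    using L.tenm_cmp[OF L.idt_hom L.idt_hom m1_hom] by (simp add: mFi_unit m1_inverse)
  ultimately show "cc D X \<cdot> (idL (Fo D X) \<otimes> ww D X) = idL (Fo D X)"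
    using cc_cmp_tenm[OF C.idt_hom C.bang_hom L.idt_hom m1_hom(2)] C.tup_bang_right[OF C.idt_hom] by simp
qed

lemma cc_coassoc: "cc D X \<cdot> (cc D X \<otimes> idL (Fo D X)) = cc D X \<cdot> (idL (Fo D X) \<otimes> cc D X)"
proof -
  have diag: "diag X \<in> homC X (X \<times>\<^sub>C X)" by blast
  have cc_left: "cc D X \<otimes> idL (Fo D X) = (Fm D (diag X) \<cdot> mFi D X X) \<otimes> (Fm D (idC X) \<cdot> idL (Fo D X))"
   and cc_right: "idL (Fo D X) \<otimes> cc D X = (Fm D (idC X) \<cdot> idL (Fo D X)) \<otimes> (Fm D (diag X) \<cdot> mFi D X X)"
    by (simp_all add: cc_def)
  have "cc D X \<cdot> (cc D X \<otimes> idL (Fo D X)) =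
      Fm D (tup (CC D) (diag X) (idC X)) \<cdot> (mFi D (X \<times>\<^sub>C X) X \<cdot> (mFi D X X \<otimes> idL (Fo D X)))"
    unfolding cc_left by (rule cc_cmp_tenm[OF diag C.idt_hom mF_hom(2) L.idt_hom])
  also have "\<dots> = Fm D (tup (CC D) (idC X) (diag X)) \<cdot> (mFi D X (X \<times>\<^sub>C X) \<cdot> (idL (Fo D X) \<otimes> mFi D X X))"
    by (simp add: C.tup_assoc[OF C.idt_hom C.idt_hom C.idt_hom] mFi_assoc)
  also have "\<dots> = cc D X \<cdot> (idL (Fo D X) \<otimes> cc D X)"
    unfolding cc_right by (rule cc_cmp_tenm[OF C.idt_hom diag L.idt_hom mF_hom(2), symmetric])
  finally show ?thesis .
qed

text \<open>Composition in the fibre of \<open>LS(C)\<close> over \<open>X\<close>, i.e. coKleisli composition for the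
  comonad \<open>F X \<otimes> -\<close> with comultiplication \<open>cc D X\<close> and counit \<open>ww D X\<close>.\<close>

definition fib_comp :: "'c \<Rightarrow> 'l \<Rightarrow> 'g \<Rightarrow> 'g \<Rightarrow> 'g" where
  "fib_comp X A v w = (cc D X \<otimes> idL A) \<cdot> (idL (Fo D X) \<otimes> v) \<cdot> w"

lemma cc_tenm_hom [intro]: "cc D X \<otimes> idL A \<in> homL (Fo D X \<odot> A) (Fo D X \<odot> Fo D X \<odot> A)"
  using L.tenm_hom[OF cc_hom L.idt_hom] by simp

lemma fib_comp_hom [intro]:
  "v \<in> homL (Fo D X \<odot> A) B \<Longrightarrow> w \<in> homL (Fo D X \<odot> B) E \<Longrightarrow> fib_comp X A v w \<in> homL (Fo D X \<odot> A) E"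
  unfolding fib_comp_def by blast

lemma cc_tenm_counit:
  "(cc D X \<otimes> idL A) \<cdot> ((ww D X \<otimes> idL (Fo D X)) \<otimes> idL A) = idL (Fo D X \<odot> A)"
  "(cc D X \<otimes> idL A) \<cdot> (idL (Fo D X) \<otimes> (ww D X \<otimes> idL A)) = idL (Fo D X \<odot> A)"
proof -
  have l: "ww D X \<otimes> idL (Fo D X) \<in> homL (Fo D X \<odot> Fo D X) (Fo D X)"
   and r: "idL (Fo D X) \<otimes> ww D X \<in> homL (Fo D X \<odot> Fo D X) (Fo D X)"
    using L.tenm_hom[OF ww_hom L.idt_hom, of X "Fo D X"] L.tenm_hom[OF L.idt_hom ww_hom, of "Fo D X" X]
    by simp_all
  show "(cc D X \<otimes> idL A) \<cdot> ((ww D X \<otimes> idL (Fo D X)) \<otimes> idL A) = idL (Fo D X \<odot> A)"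
    using L.tenm_cmp[OF cc_hom l L.idt_hom L.idt_hom, symmetric] by (simp add: cc_counit)
  show "(cc D X \<otimes> idL A) \<cdot> (idL (Fo D X) \<otimes> (ww D X \<otimes> idL A)) = idL (Fo D X \<odot> A)"
    using L.tenm_cmp[OF cc_hom r L.idt_hom L.idt_hom, symmetric]
    by (simp add: cc_counit L.tenm_assoc[OF L.idt_hom ww_hom L.idt_hom, symmetric])
qed

lemma fib_comp_unit_left:
  "v \<in> homL (Fo D X \<odot> A) B \<Longrightarrow> fib_comp X A (ww D X \<otimes> idL A) v = v"
  unfolding fib_comp_def by (simp add: cc_tenm_counit)

lemma fib_comp_counit:
  assumes v: "v \<in> homL (Fo D X \<odot> A) B" and p: "p \<in> homL B E"
  shows "fib_comp X A v (ww D X \<otimes> p) = v \<cdot> p"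
proof -
  have vp: "v \<cdot> p \<in> homL (Fo D X \<odot> A) E" using v p by blast
  have hom: "idL (Fo D X) \<otimes> v \<in> homL (Fo D X \<odot> Fo D X \<odot> A) (Fo D X \<odot> B)"
    "ww D X \<otimes> p \<in> homL (Fo D X \<odot> B) E"
    "(ww D X \<otimes> idL (Fo D X)) \<otimes> idL A \<in> homL (Fo D X \<odot> Fo D X \<odot> A) (Fo D X \<odot> A)"
    using L.tenm_hom[OF L.idt_hom v, of "Fo D X"] L.tenm_hom[OF ww_hom p, of X]
      L.tenm_hom[OF L.tenm_hom[OF ww_hom L.idt_hom] L.idt_hom, of X "Fo D X" A] by simp_all
  have "(idL (Fo D X) \<otimes> v) \<cdot> (ww D X \<otimes> p) = ww D X \<otimes> (v \<cdot> p)"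
    using L.tenm_cmp[OF L.idt_hom ww_hom[of X] v p] ww_hom[of X] by simp
  also have "\<dots> = ((ww D X \<otimes> idL (Fo D X)) \<otimes> idL A) \<cdot> (v \<cdot> p)"
    using L.tenm_cmp[OF ww_hom[of X] L.idt_hom L.idt_hom vp] ww_hom[of X] vp
    by (simp add: L.tenm_assoc[OF ww_hom L.idt_hom L.idt_hom])
  finally have "fib_comp X A v (ww D X \<otimes> p) = (cc D X \<otimes> idL A) \<cdot> (((ww D X \<otimes> idL (Fo D X)) \<otimes> idL A) \<cdot> (v \<cdot> p))"
    unfolding fib_comp_def using L.cmp_assoc[OF cc_tenm_hom hom(1,2)] by simp
  also have "\<dots> = v \<cdot> p"
    using L.cmp_assoc[OF cc_tenm_hom hom(3) vp, symmetric] vp by (simp add: cc_tenm_counit)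
  finally show ?thesis .
qed

lemma fib_comp_assoc:
  assumes v1: "v1 \<in> homL (Fo D X \<odot> A) B" and v2: "v2 \<in> homL (Fo D X \<odot> B) E"
    and v3: "v3 \<in> homL (Fo D X \<odot> E) G"
  shows "fib_comp X A (fib_comp X A v1 v2) v3 = fib_comp X A v1 (fib_comp X B v2 v3)"
proof -
  let ?X = "Fo D X"
  let ?cA = "cc D X \<otimes> idL A" and ?cB = "cc D X \<otimes> idL B" and ?c3 = "(cc D X \<otimes> idL ?X) \<otimes> idL A"
  let ?t1 = "idL ?X \<otimes> v1" and ?t2 = "idL ?X \<otimes> v2"
  have hom: "idL ?X \<otimes> ?cA \<in> homL (?X \<odot> ?X \<odot> A) (?X \<odot> ?X \<odot> ?X \<odot> A)"
    "?c3 \<in> homL (?X \<odot> ?X \<odot> A) (?X \<odot> ?X \<odot> ?X \<odot> A)"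
    "idL ?X \<otimes> ?t1 \<in> homL (?X \<odot> ?X \<odot> ?X \<odot> A) (?X \<odot> ?X \<odot> B)"
    "?t1 \<in> homL (?X \<odot> ?X \<odot> A) (?X \<odot> B)"
    "?t2 \<in> homL (?X \<odot> ?X \<odot> B) (?X \<odot> E)"
    using L.tenm_hom[OF L.idt_hom cc_tenm_hom, of ?X X A]
      L.tenm_hom[OF L.tenm_hom[OF cc_hom L.idt_hom] L.idt_hom, of X ?X A]
      L.tenm_hom[OF L.idt_hom L.tenm_hom[OF L.idt_hom v1], of ?X ?X]
      L.tenm_hom[OF L.idt_hom v1, of ?X] L.tenm_hom[OF L.idt_hom v2, of ?X]
    by simp_all
  have cc_hom': "idL ?X \<otimes> cc D X \<in> homL (?X \<odot> ?X) (?X \<odot> ?X \<odot> ?X)"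
    "cc D X \<otimes> idL ?X \<in> homL (?X \<odot> ?X) (?X \<odot> ?X \<odot> ?X)"
    using L.tenm_hom[OF L.idt_hom cc_hom, of ?X X] L.tenm_hom[OF cc_hom L.idt_hom, of X ?X] by simp_all
  have coassoc: "?cA \<cdot> (idL ?X \<otimes> ?cA) = ?cA \<cdot> ?c3"
    using L.tenm_cmp[OF cc_hom cc_hom'(1) L.idt_hom L.idt_hom, of A]
      L.tenm_cmp[OF cc_hom cc_hom'(2) L.idt_hom L.idt_hom, of A]
    by (simp add: L.tenm_assoc[OF L.idt_hom cc_hom L.idt_hom, symmetric] cc_coassoc)
  have shift: "?t1 \<cdot> ?cB = ?c3 \<cdot> (idL ?X \<otimes> ?t1)"
  proof -
    have "?t1 \<cdot> ?cB = cc D X \<otimes> v1"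
      using L.tenm_cmp[OF L.idt_hom cc_hom[of X] v1 L.idt_hom, symmetric] v1 cc_hom[of X] by simp
    also have "\<dots> = (cc D X \<otimes> idL (?X \<odot> A)) \<cdot> (idL (?X \<odot> ?X) \<otimes> v1)"
      using L.tenm_cmp[OF cc_hom[of X] L.idt_hom L.idt_hom v1] v1 cc_hom[of X] by simp
    finally show ?thesis
      by (simp add: L.tenm_assoc[OF cc_hom L.idt_hom L.idt_hom] L.tenm_assoc[OF L.idt_hom L.idt_hom v1, symmetric])
  qed
  have split: "idL ?X \<otimes> fib_comp X A v1 v2 = (idL ?X \<otimes> ?cA) \<cdot> (idL ?X \<otimes> ?t1) \<cdot> ?t2"
    unfolding fib_comp_def
    using L.tenm_cmp[OF L.idt_hom L.idt_hom L.cmp_hom[OF cc_tenm_hom hom(4)] v2]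
      L.tenm_cmp[OF L.idt_hom L.idt_hom cc_tenm_hom hom(4)] by simp
  have cA: "?cA \<in> homL (?X \<odot> A) (?X \<odot> ?X \<odot> A)" and cB: "?cB \<in> homL (?X \<odot> B) (?X \<odot> ?X \<odot> B)"
    by (rule cc_tenm_hom)+
  have t2v3: "?t2 \<cdot> v3 \<in> homL (?X \<odot> ?X \<odot> B) G" using hom(5) v3 by blast
  have "fib_comp X A (fib_comp X A v1 v2) v3 = ((?cA \<cdot> (idL ?X \<otimes> ?cA)) \<cdot> (idL ?X \<otimes> ?t1)) \<cdot> (?t2 \<cdot> v3)"
    unfolding fib_comp_def[of X A "fib_comp X A v1 v2"] split
    using hom cA v3 t2v3 L.cmp_hom[OF hom(1,3)] L.cmp_hom[OF hom(3,5)] L.cmp_hom[OF hom(1) L.cmp_hom[OF hom(3,5)]]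
    by (simp add: L.cmp_assoc)
  also have "\<dots> = (?cA \<cdot> (?t1 \<cdot> ?cB)) \<cdot> (?t2 \<cdot> v3)"
    unfolding coassoc shift using hom cA by (simp add: L.cmp_assoc)
  also have "\<dots> = fib_comp X A v1 (fib_comp X B v2 v3)"
    unfolding fib_comp_def using hom cA cB v3 t2v3 L.cmp_hom[OF hom(4) cB] L.cmp_hom[OF cB t2v3]
    by (simp add: L.cmp_assoc)
  finally show ?thesis .
qed

lemma fib_inverse_unique:
  assumes w: "w \<in> homL (Fo D X \<odot> A) B" and v: "v \<in> homL (Fo D X \<odot> B) A" and v': "v' \<in> homL (Fo D X \<odot> B) A"
    and right: "fib_comp X A w v' = ww D X \<otimes> idL A" and left: "fib_comp X B v w = ww D X \<otimes> idL B"
  shows "v = v'"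
proof -
  have "v = fib_comp X B v (ww D X \<otimes> idL A)" using fib_comp_counit[OF v L.idt_hom] v by simp
  also have "\<dots> = fib_comp X B (fib_comp X B v w) v'"
    unfolding right[symmetric] by (rule fib_comp_assoc[OF v w v', symmetric])
  also have "\<dots> = v'" unfolding left by (rule fib_comp_unit_left[OF v'])
  finally show ?thesis .
qed

lemma LScomp_fibre: "g \<in> homC X Y \<Longrightarrow> LScomp D (X, A) (idC X, v) (g, w) = (g, fib_comp X A v w)"
  unfolding LScomp_def fib_comp_def by simp

lemma LScomp_eq_fib_comp:
  assumes h: "h \<in> homC X' X" and v: "v \<in> homL (Fo D X' \<odot> A) B" and w: "w \<in> homL (Fo D X \<odot> B) E"
  shows "LScomp D (X', A) (h, v) (k, w) = (h \<bullet> k, fib_comp X' A v ((Fm D h \<otimes> idL B) \<cdot> w))"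
proof -
  have hom: "idL (Fo D X') \<otimes> v \<in> homL (Fo D X' \<odot> Fo D X' \<odot> A) (Fo D X' \<odot> B)"
    "Fm D h \<otimes> idL B \<in> homL (Fo D X' \<odot> B) (Fo D X \<odot> B)"
    using h v by auto
  have "Fm D h \<otimes> v = (idL (Fo D X') \<otimes> v) \<cdot> (Fm D h \<otimes> idL B)"
    using L.tenm_cmp[OF L.idt_hom F_hom[OF h] v L.idt_hom] F_hom[OF h] v by simp
  then show ?thesis
    unfolding LScomp_def fib_comp_def
    using hom w cc_tenm_hom[of X' A] L.cmp_hom[OF hom] L.cmp_hom[OF hom(2) w] by (simp add: L.cmp_assoc)
qed

text \<open>\<open>LSinv\<close> is a definite description: it is pinned down only because inverses in a
  fibre are unique, which is where the comonoid laws of \<open>cc\<close> and \<open>ww\<close> are needed.\<close>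

lemma LSinv_fibre:
  assumes w: "w \<in> homL (Fo D P \<odot> A) B" and iso: "LSiso D (P, A) (P, B) (idC P, w)"
  obtains v where "LSinv D (P, A) (P, B) (idC P, w) = (idC P, v)" and "v \<in> homL (Fo D P \<odot> B) A"
proof -
  let ?inverse = "\<lambda>k. k \<in> LShom D (P, B) (P, A) \<and> LScomp D (P, A) (idC P, w) k = LSid D (P, A) \<and>
    LScomp D (P, B) k (idC P, w) = LSid D (P, B)"
  have fibre: "k = (idC P, snd k) \<and> snd k \<in> homL (Fo D P \<odot> B) A \<and>
      fib_comp P A w (snd k) = ww D P \<otimes> idL A \<and> fib_comp P B (snd k) w = ww D P \<otimes> idL B"
    if "?inverse k" for k
  proof -
    obtain g v where k: "k = (g, v)" by fastforce
    with that have "g \<in> homC P P" and v: "v \<in> homL (Fo D P \<odot> B) A"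
      unfolding LShom_def by auto
    with that have "g = idC P" and "fib_comp P A w v = ww D P \<otimes> idL A"
      unfolding k LSid_def by (simp_all add: LScomp_fibre)
    with that v show ?thesis
      unfolding k LSid_def using LScomp_fibre[OF C.idt_hom] by simp
  qed
  have "\<exists>!k. ?inverse k"
  proof -
    obtain k where k: "?inverse k" using iso unfolding LSiso_def by blast
    have "k' = k" if "?inverse k'" for k'
      using fibre[OF k] fibre[OF that] fib_inverse_unique[OF w] by (metis prod.collapse)
    with k show ?thesis by blast
  qed
  then have "?inverse (LSinv D (P, A) (P, B) (idC P, w))"
    unfolding LSinv_def by (rule theI')
  with fibre that show thesis by blast
qed

lemma compr_hom:
  "f \<in> homC X Y \<Longrightarrow> u \<in> homL (Fo D X \<odot> A) B \<Longrightarrow>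
    compr D X A f u \<in> homC (X \<times>\<^sub>C Uo D A) (Y \<times>\<^sub>C Uo D B)"
  unfolding compr_def by blast

end

locale generalised_dsc =
  fixes D :: "('c,'f,'l,'g) gdsc"
  assumes gdsc: "is_gdsc D"

sublocale generalised_dsc \<subseteq> lnl_adjunction
  using gdsc unfolding is_gdsc_def by unfold_locales simp

context generalised_dsc
begin

lemma Tv_hom: "g \<in> homC X Y \<Longrightarrow> Tv D g \<in> homL (Fo D X \<odot> lam D X) (lam D Y)"
  using gdsc unfolding is_gdsc_def Tmor_def Tob_def LShom_def by auto

lemma T_product_iso:
  "LSiso D (Tob D (X \<times>\<^sub>C Y)) (X \<times>\<^sub>C Y, bip (LL D) (lam D X) (lam D Y)) (phi D X Y)"
  using gdsc unfolding is_gdsc_def by simp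

lemma lam_Uo [simp]: "lam D (Uo D A) = A"
  using gdsc unfolding is_gdsc_def by simp

lemma weakening_i2:
  "f \<in> homC X Y \<Longrightarrow> u \<in> homL (Fo D X \<odot> A) B \<Longrightarrow>
    LScomp D (X \<times>\<^sub>C Uo D A, A) (Wk D X A f u) (i2 D Y (Uo D B)) =
    LScomp D (X \<times>\<^sub>C Uo D A, A) (i2 D X (Uo D A)) (Tmor D (compr D X A f u))"
  using gdsc unfolding is_gdsc_def by simp

lemma bip_hom:
  "bpr1 (LL D) A B \<in> homL (bip (LL D) A B) A" "bpr2 (LL D) A B \<in> homL (bip (LL D) A B) B"
  "bin2 (LL D) A B \<in> homL B (bip (LL D) A B)"
  using gdsc unfolding is_gdsc_def has_biproducts_def by simp_all

lemma bip_pair_unique: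
  "f \<in> homL C A \<Longrightarrow> g \<in> homL C B \<Longrightarrow>
    \<exists>!h. h \<in> homL C (bip (LL D) A B) \<and> h \<cdot> bpr1 (LL D) A B = f \<and> h \<cdot> bpr2 (LL D) A B = g"
  using gdsc unfolding is_gdsc_def has_biproducts_def by simp

lemma phi_fibre:
  obtains w where "phi D X Y = (idC (X \<times>\<^sub>C Y), w)"
    and "w \<in> homL (Fo D (X \<times>\<^sub>C Y) \<odot> lam D (X \<times>\<^sub>C Y)) (bip (LL D) (lam D X) (lam D Y))"
proof -
  let ?P = "X \<times>\<^sub>C Y" and ?B = "bip (LL D) (lam D X) (lam D Y)"
  let ?p1 = "pr1 (CC D) X Y" and ?p2 = "pr2 (CC D) X Y"
  let ?q1 = "bpr1 (LL D) (lam D X) (lam D Y)" and ?q2 = "bpr2 (LL D) (lam D X) (lam D Y)"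
  let ?pairing = "\<lambda>h. h \<in> LShom D (Tob D ?P) (?P, ?B) \<and>
    LScomp D (Tob D ?P) h (LSproj1 D X Y (lam D X) (lam D Y)) = Tmor D ?p1 \<and>
    LScomp D (Tob D ?P) h (LSproj2 D X Y (lam D X) (lam D Y)) = Tmor D ?p2"
  let ?fibre = "\<lambda>w. w \<in> homL (Fo D ?P \<odot> lam D ?P) ?B \<and> w \<cdot> ?q1 = Tv D ?p1 \<and> w \<cdot> ?q2 = Tv D ?p2"
  have pairing_fibre: "?pairing (idC ?P, w) \<longleftrightarrow> ?fibre w"
    if w: "w \<in> homL (Fo D ?P \<odot> lam D ?P) ?B" for w
    using w C.idt_hom[of ?P] C.pr_hom[of X Y] fib_comp_counit[OF w bip_hom(1)] fib_comp_counit[OF w bip_hom(2)]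
    unfolding LShom_def Tob_def Tmor_def LSproj1_def LSproj2_def by (simp add: LScomp_fibre)
  have pairing_iff: "?pairing h \<longleftrightarrow> (\<exists>w. h = (idC ?P, w) \<and> ?fibre w)" for h
  proof
    assume h: "?pairing h"
    obtain g w where gw: "h = (g, w)" by fastforce
    with h have g: "g \<in> homC ?P ?P" and w: "w \<in> homL (Fo D ?P \<odot> lam D ?P) ?B"
      and "g \<bullet> ?p1 = ?p1" and "g \<bullet> ?p2 = ?p2"
      unfolding LShom_def Tob_def LScomp_def Tmor_def LSproj1_def LSproj2_def by auto
    then have "g = idC ?P"
      using C.tup_unique[OF g C.pr_hom(1) C.pr_hom(2)] C.tup_pr_idt by simp
    with h w show "\<exists>w. h = (idC ?P, w) \<and> ?fibre w"
      unfolding gw using pairing_fibre by blast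
  qed (use pairing_fibre in blast)
  moreover have "\<exists>!w. ?fibre w"
    by (rule bip_pair_unique[OF Tv_hom[OF C.pr_hom(1)] Tv_hom[OF C.pr_hom(2)]])
  ultimately have "\<exists>!h. ?pairing h" by (metis prod.inject)
  then have "?pairing (phi D X Y)"
    unfolding phi_def by (rule theI')
  with pairing_iff that show thesis by blast
qed

lemma i2_fibre:
  obtains s where "i2 D X Y = (idC (X \<times>\<^sub>C Y), s)"
    and "s \<in> homL (Fo D (X \<times>\<^sub>C Y) \<odot> lam D Y) (lam D (X \<times>\<^sub>C Y))"
proof -
  let ?P = "X \<times>\<^sub>C Y" and ?B = "bip (LL D) (lam D X) (lam D Y)"
  obtain w where phi: "phi D X Y = (idC ?P, w)" and w: "w \<in> homL (Fo D ?P \<odot> lam D ?P) ?B"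
    by (rule phi_fibre)
  obtain v where inv: "LSinv D (Tob D ?P) (?P, ?B) (phi D X Y) = (idC ?P, v)"
    and v: "v \<in> homL (Fo D ?P \<odot> ?B) (lam D ?P)"
    using LSinv_fibre[OF w] T_product_iso[of X Y] unfolding phi Tob_def by blast
  have "ww D ?P \<otimes> bin2 (LL D) (lam D X) (lam D Y) \<in> homL (Fo D ?P \<odot> lam D Y) ?B"
    using L.tenm_hom[OF ww_hom bip_hom(3)] by simp
  then have "fib_comp ?P (lam D Y) (ww D ?P \<otimes> bin2 (LL D) (lam D X) (lam D Y)) v
      \<in> homL (Fo D ?P \<odot> lam D Y) (lam D ?P)"
    using v by (rule fib_comp_hom)
  moreover have "i2 D X Y = (idC ?P, fib_comp ?P (lam D Y) (ww D ?P \<otimes> bin2 (LL D) (lam D X) (lam D Y)) v)"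
    unfolding i2_def LSinj2_def inv using LScomp_fibre[OF C.idt_hom] by simp
  ultimately show thesis by (rule that[rotated])
qed

end

theorem proposition4p16:
  fixes D :: "('c,'f,'l,'g) gdsc"
  assumes "is_gdsc D"
    and "f \<in> hom (CC D) X Y"
    and "u \<in> hom (LL D) (ten (LL D) (Fo D X) A) B"
  shows "D2 D X (Uo D A) (compr D X A f u) =
     LScomp D (prd (CC D) X (Uo D A), A)
       (reindex D (prd (CC D) X (Uo D A)) (pr1 (CC D) X (Uo D A)) A (idt (CC D) X, u))
       (reindex D (prd (CC D) X (Uo D A)) (compr D X A f u) (lam D (Uo D B)) (i2 D Y (Uo D B)))"
proof -
  interpret generalised_dsc D by unfold_locales (fact assms(1))
  let ?P = "X \<times>\<^sub>C Uo D A" and ?c = "compr D X A f u"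
  let ?v = "(Fm D (pr1 (CC D) X (Uo D A)) \<otimes> idL A) \<cdot> u"
  have c: "?c \<in> homC ?P (Y \<times>\<^sub>C Uo D B)" using compr_hom[OF assms(2,3)] .
  have v: "?v \<in> homL (Fo D ?P \<odot> A) B" using assms(3) by blast
  obtain s where s: "i2 D X (Uo D A) = (idC ?P, s)" "s \<in> homL (Fo D ?P \<odot> A) (lam D ?P)"
    using i2_fibre[of X "Uo D A"] by auto
  obtain s' where s': "i2 D Y (Uo D B) = (idC (Y \<times>\<^sub>C Uo D B), s')"
    "s' \<in> homL (Fo D (Y \<times>\<^sub>C Uo D B) \<odot> B) (lam D (Y \<times>\<^sub>C Uo D B))"
    using i2_fibre[of Y "Uo D B"] by auto
  txt \<open>Axiom (t.3), with both sides split into base and fibre part.\<close>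
  have "fib_comp ?P A s (Tv D ?c) = fib_comp ?P A ?v ((Fm D ?c \<otimes> idL B) \<cdot> s')"
    using weakening_i2[OF assms(2,3)] c v s s'
    by (simp add: Wk_def Tmor_def LScomp_fibre LScomp_eq_fib_comp)
  then show ?thesis
    using s s' C.idt_hom[of ?P] by (simp add: D2_def Dm_def reindex_def LScomp_fibre)
qed

end
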